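(* The map $V\mapsto Z_V$ induces a bijection between the set of isomorphism (equivalence) classes of Whittaker modules of type $\eta$ over $R$ and the set of ideals of the center $Z(R)$.
   Context: Let $f\in\mathbb{C}[H]$ be a polynomial. $R=R(f)$ is the associative $\mathbb{C}$-algebra generated by $E,F,H$ with relations $EF-FE=f(H)$, $HE-EH=E$, $HF-FH=-F$. Let $R(E)=\mathbb{C}[E]$ be the subalgebra generated by $E$. Let $u\in\mathbb{C}[H]$ satisfy $f(H)=\tfrac12(u(H+1)-u(H))$ and $\Omega=2FE+u(H+1)$; the center $Z(R)$ is the polynomial ring $\mathbb{C}[\Omega]$. Fix an algebra homomorphism $\eta:R(E)\to\mathbb{C}$ with $\eta(E)\neq 0$. A vector $v$ of an $R$-module $V$ is a Whittaker vector (of type $\eta$) if $Ev=\eta(E)v$; $V$ is a Whittaker module of type $\eta$ if $V=Rv$ for some Whittaker vector $v$. For an $R$-module $V$, $Z_V=\mathrm{Ann}_R(V)\cap Z(R)$. *)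

theory Defs
  imports "HOL-Computational_Algebra.Polynomial"
begin

text \<open>An R(f)-module is modelled as a C-subspace M of an ambient C-vector space
  (scalar multiplication sc), with three C-linear operators e, f, h on M (actions
  of E, F, H) satisfying the defining relations of R(f).\<close>

definition op_poly :: "(complex \<Rightarrow> 'v::ab_group_add \<Rightarrow> 'v) \<Rightarrow> complex poly \<Rightarrow> ('v \<Rightarrow> 'v) \<Rightarrow> 'v \<Rightarrow> 'v" where
  "op_poly sc p T x = (\<Sum>i\<le>degree p. sc (coeff p i) ((T ^^ i) x))"

definition lin_on :: "(complex \<Rightarrow> 'v::ab_group_add \<Rightarrow> 'v) \<Rightarrow> 'v set \<Rightarrow> ('v \<Rightarrow> 'v) \<Rightarrow> bool" where
  "lin_on sc M T \<longleftrightarrow> (\<forall>x\<in>M. T x \<in> M) \<and> (\<forall>x\<in>M. \<forall>y\<in>M. T (x + y) = T x + T y)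
     \<and> (\<forall>c. \<forall>x\<in>M. T (sc c x) = sc c (T x))"

definition R_module :: "complex poly \<Rightarrow> (complex \<Rightarrow> 'v::ab_group_add \<Rightarrow> 'v) \<Rightarrow> 'v set
    \<Rightarrow> ('v \<Rightarrow> 'v) \<Rightarrow> ('v \<Rightarrow> 'v) \<Rightarrow> ('v \<Rightarrow> 'v) \<Rightarrow> bool" where
  "R_module fp sc M e f h \<longleftrightarrow> vector_space sc \<and> module.subspace sc M
     \<and> lin_on sc M e \<and> lin_on sc M f \<and> lin_on sc M h
     \<and> (\<forall>x\<in>M. e (f x) - f (e x) = op_poly sc fp h x)
     \<and> (\<forall>x\<in>M. h (e x) - e (h x) = e x)
     \<and> (\<forall>x\<in>M. h (f x) - f (h x) = - f x)"

definition submod_gen :: "(complex \<Rightarrow> 'v::ab_group_add \<Rightarrow> 'v) \<Rightarrow> ('v \<Rightarrow> 'v) \<Rightarrow> ('v \<Rightarrow> 'v)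
    \<Rightarrow> ('v \<Rightarrow> 'v) \<Rightarrow> 'v \<Rightarrow> 'v set" where
  "submod_gen sc e f h v = \<Inter>{N. module.subspace sc N \<and> v \<in> N
      \<and> (\<forall>x\<in>N. e x \<in> N \<and> f x \<in> N \<and> h x \<in> N)}"

text \<open>Whittaker module of type eta, where eta is the value eta(E) (nonzero).\<close>
definition whittaker :: "complex poly \<Rightarrow> complex \<Rightarrow> (complex \<Rightarrow> 'v::ab_group_add \<Rightarrow> 'v) \<Rightarrow> 'v set
    \<Rightarrow> ('v \<Rightarrow> 'v) \<Rightarrow> ('v \<Rightarrow> 'v) \<Rightarrow> ('v \<Rightarrow> 'v) \<Rightarrow> bool" where
  "whittaker fp eta sc M e f h \<longleftrightarrow> R_module fp sc M e f h
     \<and> (\<exists>v\<in>M. e v = sc eta v \<and> M = submod_gen sc e f h v)"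

definition omega_op :: "complex poly \<Rightarrow> (complex \<Rightarrow> 'v::ab_group_add \<Rightarrow> 'v)
    \<Rightarrow> ('v \<Rightarrow> 'v) \<Rightarrow> ('v \<Rightarrow> 'v) \<Rightarrow> ('v \<Rightarrow> 'v) \<Rightarrow> 'v \<Rightarrow> 'v" where
  "omega_op u sc e f h x = sc 2 (f (e x)) + op_poly sc (pcompose u [:1, 1:]) h x"

text \<open>Z_V, identified with an ideal of C[x] via Z(R) = C[Omega]:
  the polynomials p such that p(Omega) annihilates V.\<close>
definition ZV :: "complex poly \<Rightarrow> (complex \<Rightarrow> 'v::ab_group_add \<Rightarrow> 'v) \<Rightarrow> 'v set
    \<Rightarrow> ('v \<Rightarrow> 'v) \<Rightarrow> ('v \<Rightarrow> 'v) \<Rightarrow> ('v \<Rightarrow> 'v) \<Rightarrow> complex poly set" where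
  "ZV u sc M e f h = {p. \<forall>x\<in>M. op_poly sc p (omega_op u sc e f h) x = 0}"

definition is_ideal :: "complex poly set \<Rightarrow> bool" where
  "is_ideal I \<longleftrightarrow> 0 \<in> I \<and> (\<forall>a\<in>I. \<forall>b\<in>I. a + b \<in> I) \<and> (\<forall>a\<in>I. \<forall>r. r * a \<in> I)"

definition R_iso :: "(complex \<Rightarrow> 'a::ab_group_add \<Rightarrow> 'a) \<Rightarrow> 'a set \<Rightarrow> ('a \<Rightarrow> 'a) \<Rightarrow> ('a \<Rightarrow> 'a) \<Rightarrow> ('a \<Rightarrow> 'a)
   \<Rightarrow> (complex \<Rightarrow> 'b::ab_group_add \<Rightarrow> 'b) \<Rightarrow> 'b set \<Rightarrow> ('b \<Rightarrow> 'b) \<Rightarrow> ('b \<Rightarrow> 'b) \<Rightarrow> ('b \<Rightarrow> 'b) \<Rightarrow> bool" where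
  "R_iso sc1 M1 e1 f1 h1 sc2 M2 e2 f2 h2 \<longleftrightarrow> (\<exists>\<phi>. bij_betw \<phi> M1 M2
     \<and> (\<forall>x\<in>M1. \<forall>y\<in>M1. \<phi> (x + y) = \<phi> x + \<phi> y)
     \<and> (\<forall>c. \<forall>x\<in>M1. \<phi> (sc1 c x) = sc2 c (\<phi> x))
     \<and> (\<forall>x\<in>M1. \<phi> (e1 x) = e2 (\<phi> x) \<and> \<phi> (f1 x) = f2 (\<phi> x) \<and> \<phi> (h1 x) = h2 (\<phi> x)))"

end

(*
  The Casimir element Omega is central in R(f), and E, F shift polynomials in H:
  E p(H) = p(H - 1) E and F p(H) = p(H + 1) F.  Hence a Whittaker module with Whittaker
  vector v is spanned by the vectors P(Omega, H) v for P in C[Omega][H], and E, F, H act on P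
  by formulas depending only on eta and u.  If P(Omega, H) v = 0, applying E (with eta nonzero)
  shows that the first difference P(Omega, H - 1) - P(Omega, H) also kills v; it has lower
  H-degree and leading coefficient -deg(P) lc(P), so induction on the H-degree puts every
  coefficient of P into Z_V.  Thus the kernel of P |-> P(Omega, H) v is determined by Z_V,
  and two Whittaker modules with the same Z_V are isomorphic via P(Omega, H) v1 |-> P(Omega, H) v2.
  Conversely, for the ideal (g) the same formulas on C[Omega][H] with coefficients reduced
  modulo g define a Whittaker module with Z_V = (g), which is embedded linearly into C[x].
*)

theory Submission
  imports Defs "HOL-Library.Nat_Bijection"
begin

section \<open>Ideals of C[x] and polynomial identities\<close>

lemma is_ideal_zero: "is_ideal I \<Longrightarrow> 0 \<in> I"
  and is_ideal_add: "is_ideal I \<Longrightarrow> a \<in> I \<Longrightarrow> b \<in> I \<Longrightarrow> a + b \<in> I"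
  and is_ideal_mult: "is_ideal I \<Longrightarrow> a \<in> I \<Longrightarrow> r * a \<in> I"
  unfolding is_ideal_def by blast+

lemma is_ideal_smult: "is_ideal I \<Longrightarrow> a \<in> I \<Longrightarrow> smult c a \<in> I"
  using is_ideal_mult[of I a "[:c:]"] by simp

lemma ideal_eq_multiples:
  assumes I: "is_ideal I"
  obtains g where "I = {p. g dvd p}"
proof (cases "I \<subseteq> {0}")
  case True
  then have "I = {p. 0 dvd p}" using is_ideal_zero[OF I] by auto
  then show ?thesis by (rule that)
next
  case False
  then have ex: "\<exists>n. \<exists>q\<in>I. q \<noteq> 0 \<and> degree q = n" by blast
  define n where "n = (LEAST n. \<exists>q\<in>I. q \<noteq> 0 \<and> degree q = n)"
  obtain g where g: "g \<in> I" "g \<noteq> 0" "degree g = n"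
    using LeastI_ex[OF ex] unfolding n_def by blast
  have "I = {p. g dvd p}"
  proof (intro set_eqI iffI)
    fix p assume p: "p \<in> I"
    have "p + (- (p div g)) * g \<in> I"
      by (rule is_ideal_add[OF I p is_ideal_mult[OF I g(1)]])
    then have "p mod g \<in> I" using minus_div_mult_eq_mod[of p g] by simp
    moreover have "\<not> n \<le> degree (p mod g)" if "p mod g \<noteq> 0"
      using degree_mod_less'[OF g(2) that] g(3) by simp
    ultimately have "p mod g = 0"
      unfolding n_def by (metis (mono_tags, lifting) Least_le)
    then show "p \<in> {p. g dvd p}" by (simp add: mod_eq_0_iff_dvd)
  next
    fix p assume "p \<in> {p. g dvd p}"
    then show "p \<in> I" using is_ideal_mult[OF I g(1)] by (auto elim!: dvdE simp: mult.commute)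
  qed
  then show ?thesis by (rule that)
qed

definition poly_lift :: "'a::zero poly \<Rightarrow> 'a poly poly" where
  "poly_lift p = map_poly (\<lambda>a. [:a:]) p"

lemma poly_lift_0 [simp]: "poly_lift 0 = 0"
  by (simp add: poly_lift_def)

lemma coeff_poly_lift: "coeff (poly_lift p) k = [:coeff p k:]"
  by (simp add: poly_lift_def coeff_map_poly)

lemma poly_lift_pCons: "poly_lift (pCons a p) = pCons [:a:] (poly_lift p)"
  by (simp add: poly_lift_def map_poly_pCons)

lemma poly_lift_add: "poly_lift (p + q) = poly_lift p + poly_lift q"
  and poly_lift_diff: "poly_lift (p - q) = poly_lift p - poly_lift q"
  and poly_lift_smult: "poly_lift (smult c p) = smult [:c:] (poly_lift p)"
  for p q :: "'a::comm_ring_1 poly"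
  by (rule poly_eqI, simp add: coeff_poly_lift mult.commute)+

lemma poly_lift_mult: "poly_lift (p * q) = poly_lift p * poly_lift q" for p q :: "'a::comm_ring_1 poly"
  by (induction p) (simp_all add: poly_lift_pCons poly_lift_add poly_lift_smult)

lemma poly_lift_pcompose: "poly_lift (pcompose p q) = pcompose (poly_lift p) (poly_lift q)"
  for p q :: "'a::comm_ring_1 poly"
  by (induction p) (simp_all add: poly_lift_pCons poly_lift_add poly_lift_mult pcompose_pCons)

lemma pcompose_shift_diff:
  fixes P :: "'a::idom poly"
  assumes P: "degree P = Suc m"
  defines "Q \<equiv> pcompose P [:-1, 1:] - P"
  shows "degree Q \<le> m" and "coeff Q m = - (of_nat (Suc m) * lead_coeff P)"
proof -
  define c where "c = lead_coeff P"
  define P0 where "P0 = P - monom c (Suc m)"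
  define A where "A = smult c ([:-1, 1:] ^ Suc m) - monom c (Suc m)"
  define B where "B = pcompose P0 [:-1, 1:] - P0"
  have P0: "degree P0 \<le> m"
    by (rule degree_le) (use P in \<open>auto simp: P0_def c_def coeff_monom coeff_eq_0 Suc_le_eq\<close>)
  have "pcompose (monom c (Suc m)) [:-1, 1:] = smult c ([:-1, 1:] ^ Suc m)"
    by (simp add: pcompose_altdef map_poly_monom poly_monom del: power_Suc)
  then have "Q = A + B"
    unfolding Q_def A_def B_def P0_def by (simp add: pcompose_diff)
  moreover have "coeff A i = (if i \<le> m then c * of_nat (Suc m choose i) * (-1) ^ (Suc m - i) else 0)"
    for i
  proof (cases "i \<le> Suc m")
    case True
    then consider "i \<le> m" | "i = Suc m" by linarith
    then show ?thesis
      by cases (auto simp: A_def coeff_monom coeff_linear_poly_power simp del: power_Suc)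
  next
    case False
    have "degree ([:-1, 1:] ^ Suc m :: 'a poly) = Suc m" by (rule degree_linear_power)
    then show ?thesis using False by (simp add: A_def coeff_monom coeff_eq_0 del: power_Suc)
  qed
  moreover have "degree B \<le> m"
    using P0 by (simp add: B_def degree_diff_le degree_pcompose)
  moreover have "coeff B m = 0"
  proof (cases "degree P0 = m")
    case True
    then show ?thesis using lead_coeff_comp[of "[:-1, 1:]" P0] by (simp add: B_def degree_pcompose)
  next
    case False
    then show ?thesis using P0 by (simp add: B_def coeff_eq_0 degree_pcompose)
  qed
  ultimately show "degree Q \<le> m" "coeff Q m = - (of_nat (Suc m) * lead_coeff P)"
    by (auto intro!: degree_le simp: coeff_eq_0 c_def)
qed

section \<open>Polynomials in linear operators\<close>

locale complex_vector_space = vector_space sc for sc :: "complex \<Rightarrow> 'v::ab_group_add \<Rightarrow> 'v"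
begin

lemma lin_on_in: "lin_on sc M T \<Longrightarrow> x \<in> M \<Longrightarrow> T x \<in> M"
  unfolding lin_on_def by blast

lemma lin_on_add: "lin_on sc M T \<Longrightarrow> x \<in> M \<Longrightarrow> y \<in> M \<Longrightarrow> T (x + y) = T x + T y"
  unfolding lin_on_def by blast

lemma lin_on_scale: "lin_on sc M T \<Longrightarrow> x \<in> M \<Longrightarrow> T (sc c x) = sc c (T x)"
  unfolding lin_on_def by blast

lemma lin_on_zero: "lin_on sc M T \<Longrightarrow> subspace M \<Longrightarrow> T 0 = 0"
  using lin_on_add[of M T 0 0] subspace_0[of M] by simp

lemma lin_on_diff:
  "lin_on sc M T \<Longrightarrow> subspace M \<Longrightarrow> x \<in> M \<Longrightarrow> y \<in> M \<Longrightarrow> T (x - y) = T x - T y"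
  using lin_on_add[of M T "x - y" y] subspace_diff[of M x y] by (simp add: eq_diff_eq)

lemma lin_on_funpow: "lin_on sc M T \<Longrightarrow> lin_on sc M (T ^^ i)"
  by (induction i) (auto simp: lin_on_def)

lemma lin_on_sum:
  assumes "lin_on sc M T" "subspace M" "\<And>i. i \<in> A \<Longrightarrow> y i \<in> M"
  shows "T (\<Sum>i\<in>A. y i) = (\<Sum>i\<in>A. T (y i))"
  using assms(3)
proof (induction A rule: infinite_finite_induct)
  case (insert x F)
  have "(\<Sum>i\<in>F. y i) \<in> M" using insert by (intro subspace_sum[OF assms(2)]) auto
  then show ?case using insert lin_on_add[OF assms(1)] by simp
qed (use lin_on_zero[OF assms(1,2)] in simp_all)

lemma op_poly_eq_sum_lessThan:
  "degree p < n \<Longrightarrow> op_poly sc p T x = (\<Sum>i<n. sc (coeff p i) ((T ^^ i) x))"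
  unfolding op_poly_def by (intro sum.mono_neutral_left) (auto simp: coeff_eq_0)

lemma op_poly_0 [simp]: "op_poly sc 0 T x = 0"
  by (simp add: op_poly_def)

lemma op_poly_const [simp]: "op_poly sc [:c:] T x = sc c x"
  by (simp add: op_poly_def)

lemma op_poly_add: "op_poly sc (p + q) T x = op_poly sc p T x + op_poly sc q T x"
proof -
  define n where "n = Suc (max (degree p) (degree q))"
  have "degree (p + q) < n" "degree p < n" "degree q < n"
    using degree_add_le_max[of p q] by (auto simp: n_def)
  then show ?thesis
    by (simp add: op_poly_eq_sum_lessThan[of _ n] scale_left_distrib sum.distrib)
qed

lemma op_poly_diff: "op_poly sc (p - q) T x = op_poly sc p T x - op_poly sc q T x"
proof -
  define n where "n = Suc (max (degree p) (degree q))"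
  have "degree (p - q) < n" "degree p < n" "degree q < n"
    using degree_diff_le_max[of p q] by (auto simp: n_def)
  then show ?thesis
    by (simp add: op_poly_eq_sum_lessThan[of _ n] scale_left_diff_distrib sum_subtractf)
qed

lemma op_poly_smult: "op_poly sc (smult c p) T x = sc c (op_poly sc p T x)"
proof -
  have "degree (smult c p) < Suc (degree p)" "degree p < Suc (degree p)"
    by auto
  then show ?thesis
    by (simp only: op_poly_eq_sum_lessThan) (simp add: scale_sum_right del: sum.lessThan_Suc)
qed

lemma op_poly_in:
  assumes "subspace N" "\<And>y. y \<in> N \<Longrightarrow> T y \<in> N" "x \<in> N"
  shows "op_poly sc p T x \<in> N"
proof -
  have "(T ^^ i) x \<in> N" for i by (induction i) (use assms in auto)
  then show ?thesis
    unfolding op_poly_def by (intro subspace_sum[OF assms(1)] subspace_scale[OF assms(1)])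
qed

lemma op_poly_pCons:
  assumes T: "lin_on sc M T" and M: "subspace M" and x: "x \<in> M"
  shows "op_poly sc (pCons a p) T x = sc a x + T (op_poly sc p T x)"
proof -
  define n where "n = Suc (degree p)"
  have Ti: "(T ^^ i) x \<in> M" for i using lin_on_in[OF lin_on_funpow[OF T] x] .
  have "op_poly sc (pCons a p) T x = (\<Sum>i<Suc n. sc (coeff (pCons a p) i) ((T ^^ i) x))"
    by (rule op_poly_eq_sum_lessThan) (simp add: n_def degree_pCons_le le_imp_less_Suc)
  also have "\<dots> = sc a x + (\<Sum>i<n. T (sc (coeff p i) ((T ^^ i) x)))"
    by (subst sum.lessThan_Suc_shift) (simp add: Ti lin_on_scale[OF T])
  also have "(\<Sum>i<n. T (sc (coeff p i) ((T ^^ i) x))) = T (op_poly sc p T x)"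
    by (simp only: op_poly_eq_sum_lessThan[of p n] n_def lessI)
      (simp add: lin_on_sum[OF T M] Ti subspace_scale[OF M] del: sum.lessThan_Suc)
  finally show ?thesis .
qed

lemma lin_on_op_poly:
  assumes T: "lin_on sc M T" and M: "subspace M"
  shows "lin_on sc M (op_poly sc p T)"
proof -
  have in_M: "op_poly sc q T x \<in> M" if "x \<in> M" for x q
    using op_poly_in[OF M lin_on_in[OF T] that] .
  have "op_poly sc p T (x + y) = op_poly sc p T x + op_poly sc p T y
      \<and> op_poly sc p T (sc c x) = sc c (op_poly sc p T x)" if "x \<in> M" "y \<in> M" for x y c
    by (induction p)
      (use that in \<open>simp_all add: op_poly_pCons[OF T M] in_M subspace_add[OF M] subspace_scale[OF M]
         lin_on_add[OF T] lin_on_scale[OF T] scale_right_distrib scale_left_commute\<close>)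
  then show ?thesis using in_M M subspace_0 unfolding lin_on_def by blast
qed

lemma op_poly_mult:
  assumes T: "lin_on sc M T" and M: "subspace M" and x: "x \<in> M"
  shows "op_poly sc (p * q) T x = op_poly sc p T (op_poly sc q T x)"
proof (induction p)
  case (pCons a p)
  have "op_poly sc q T x \<in> M" by (rule op_poly_in[OF M lin_on_in[OF T] x])
  then show ?case
    using pCons by (simp add: op_poly_add op_poly_smult op_poly_pCons[OF T M] x lin_on_zero[OF T M])
qed simp

lemma op_poly_commute:
  assumes T: "lin_on sc M T" and S: "lin_on sc M S" and M: "subspace M" and x: "x \<in> M"
    and ST: "\<And>y. y \<in> M \<Longrightarrow> S (T y) = T (S y)"
  shows "S (op_poly sc p T x) = op_poly sc p T (S x)"
proof (induction p)
  case (pCons a p)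
  have "op_poly sc p T x \<in> M" by (rule op_poly_in[OF M lin_on_in[OF T] x])
  then show ?case
    using pCons x by (simp add: op_poly_pCons[OF T M] lin_on_in[OF S] lin_on_in[OF T]
        lin_on_add[OF S] lin_on_scale[OF S] subspace_scale[OF M] ST)
qed (simp add: lin_on_zero[OF S M])

lemma op_poly_shift:
  assumes T: "lin_on sc M T" and S: "lin_on sc M S" and M: "subspace M" and x: "x \<in> M"
    and ST: "\<And>y. y \<in> M \<Longrightarrow> S (T y) = T (S y) + sc a (S y)"
  shows "S (op_poly sc p T x) = op_poly sc (pcompose p [:a, 1:]) T (S x)"
proof (induction p)
  case (pCons b p)
  define y where "y = op_poly sc p T x"
  define z where "z = op_poly sc (pcompose p [:a, 1:]) T (S x)"
  have y: "y \<in> M" and z: "z \<in> M"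
    using x by (simp_all add: y_def z_def op_poly_in[OF M lin_on_in[OF T]] lin_on_in[OF S])
  have "S (op_poly sc (pCons b p) T x) = sc b (S x) + (T z + sc a z)"
    using pCons x y by (simp add: op_poly_pCons[OF T M] lin_on_add[OF S] lin_on_scale[OF S]
        subspace_scale[OF M] lin_on_in[OF T] ST y_def z_def)
  also have "\<dots> = op_poly sc (pcompose (pCons b p) [:a, 1:]) T (S x)"
    using x z by (simp add: pcompose_pCons op_poly_add op_poly_mult[OF T M] lin_on_in[OF S]
        op_poly_pCons[OF T M] op_poly_smult z_def[symmetric] add.commute)
  finally show ?case .
qed (simp add: lin_on_zero[OF S M])

lemma submod_gen_subspace: "subspace (submod_gen sc e f h v)"
  unfolding submod_gen_def by (rule subspace_Inter) blast

lemma submod_gen_in: "v \<in> submod_gen sc e f h v"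
  unfolding submod_gen_def by blast

lemma submod_gen_closed:
  "x \<in> submod_gen sc e f h v
    \<Longrightarrow> e x \<in> submod_gen sc e f h v \<and> f x \<in> submod_gen sc e f h v \<and> h x \<in> submod_gen sc e f h v"
  unfolding submod_gen_def by blast

lemma submod_gen_least:
  "subspace N \<Longrightarrow> v \<in> N \<Longrightarrow> (\<And>x. x \<in> N \<Longrightarrow> e x \<in> N \<and> f x \<in> N \<and> h x \<in> N)
    \<Longrightarrow> submod_gen sc e f h v \<subseteq> N"
  unfolding submod_gen_def by blast

end

lemma op_poly_intertwine:
  assumes V1: "complex_vector_space s1" and V2: "complex_vector_space s2"
    and M1: "module.subspace s1 M1" and M2: "module.subspace s2 M2"
    and T1: "lin_on s1 M1 T1" and T2: "lin_on s2 M2 T2"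
    and \<phi>_in: "\<And>x. x \<in> M1 \<Longrightarrow> \<phi> x \<in> M2"
    and \<phi>_add: "\<And>x y. x \<in> M1 \<Longrightarrow> y \<in> M1 \<Longrightarrow> \<phi> (x + y) = \<phi> x + \<phi> y"
    and \<phi>_scale: "\<And>c x. x \<in> M1 \<Longrightarrow> \<phi> (s1 c x) = s2 c (\<phi> x)"
    and \<phi>_T: "\<And>x. x \<in> M1 \<Longrightarrow> \<phi> (T1 x) = T2 (\<phi> x)"
    and x: "x \<in> M1"
  shows "\<phi> (op_poly s1 p T1 x) = op_poly s2 p T2 (\<phi> x)"
proof -
  interpret V1: complex_vector_space s1 by (rule V1)
  interpret V2: complex_vector_space s2 by (rule V2)
  show ?thesis
  proof (induction p)
    case 0
    show ?case using \<phi>_add[of 0 0] V1.subspace_0[OF M1] by simp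
  next
    case (pCons c p)
    have "op_poly s1 p T1 x \<in> M1" by (rule V1.op_poly_in[OF M1 V1.lin_on_in[OF T1] x])
    then show ?case
      using pCons x by (simp add: V1.op_poly_pCons[OF T1 M1] V2.op_poly_pCons[OF T2 M2] \<phi>_in
          \<phi>_add \<phi>_scale \<phi>_T V1.subspace_scale[OF M1] V1.lin_on_in[OF T1])
  qed
qed

definition op_poly2 :: "(complex \<Rightarrow> 'v::ab_group_add \<Rightarrow> 'v) \<Rightarrow> ('v \<Rightarrow> 'v) \<Rightarrow> ('v \<Rightarrow> 'v)
    \<Rightarrow> complex poly poly \<Rightarrow> 'v \<Rightarrow> 'v" where
  "op_poly2 sc W T P x = (\<Sum>i\<le>degree P. (T ^^ i) (op_poly sc (coeff P i) W x))"

locale commuting_operators = complex_vector_space sc for sc :: "complex \<Rightarrow> 'v::ab_group_add \<Rightarrow> 'v" +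
  fixes M W T
  assumes subspace_M: "subspace M" and lin_W: "lin_on sc M W" and lin_T: "lin_on sc M T"
    and W_T_commute: "\<And>y. y \<in> M \<Longrightarrow> W (T y) = T (W y)"
begin

abbreviation op :: "complex poly poly \<Rightarrow> 'v \<Rightarrow> 'v" where
  "op \<equiv> op_poly2 sc W T"

lemma op_poly_W_in: "x \<in> M \<Longrightarrow> op_poly sc p W x \<in> M"
  by (rule op_poly_in[OF subspace_M lin_on_in[OF lin_W]])

lemma funpow_T_in: "x \<in> M \<Longrightarrow> (T ^^ i) x \<in> M"
  by (rule lin_on_in[OF lin_on_funpow[OF lin_T]])

lemma funpow_T_zero: "(T ^^ i) 0 = 0"
  by (rule lin_on_zero[OF lin_on_funpow[OF lin_T] subspace_M])

lemma op_eq_sum_lessThan: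
  "degree P < n \<Longrightarrow> op P x = (\<Sum>i<n. (T ^^ i) (op_poly sc (coeff P i) W x))"
  unfolding op_poly2_def by (intro sum.mono_neutral_left) (auto simp: coeff_eq_0 funpow_T_zero)

lemma op_in_subspace:
  assumes N: "subspace N" and W: "\<And>y. y \<in> N \<Longrightarrow> W y \<in> N" and T: "\<And>y. y \<in> N \<Longrightarrow> T y \<in> N"
    and x: "x \<in> N"
  shows "op P x \<in> N"
proof -
  have "(T ^^ i) y \<in> N" if "y \<in> N" for i y by (induction i) (use that T in auto)
  then show ?thesis
    unfolding op_poly2_def using op_poly_in[OF N W x] by (intro subspace_sum[OF N]) simp
qed

lemma op_in: "x \<in> M \<Longrightarrow> op P x \<in> M"
  by (rule op_in_subspace[OF subspace_M lin_on_in[OF lin_W] lin_on_in[OF lin_T]])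

lemma op_0 [simp]: "op 0 x = 0"
  by (simp add: op_poly2_def)

lemma op_const: "op [:p:] x = op_poly sc p W x"
  by (simp add: op_poly2_def)

lemma op_1: "op 1 x = x"
  using op_const[of 1 x] by (simp add: one_pCons)

lemma op_pCons:
  assumes x: "x \<in> M"
  shows "op (pCons p P) x = op_poly sc p W x + T (op P x)"
proof -
  define n where "n = Suc (degree P)"
  have "op (pCons p P) x = (\<Sum>i<Suc n. (T ^^ i) (op_poly sc (coeff (pCons p P) i) W x))"
    by (rule op_eq_sum_lessThan) (simp add: n_def degree_pCons_le le_imp_less_Suc)
  also have "\<dots> = op_poly sc p W x + (\<Sum>i<n. T ((T ^^ i) (op_poly sc (coeff P i) W x)))"
    by (subst sum.lessThan_Suc_shift) (simp add: funpow_swap1)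
  also have "(\<Sum>i<n. T ((T ^^ i) (op_poly sc (coeff P i) W x))) = T (op P x)"
    by (simp only: op_eq_sum_lessThan[of P n] n_def lessI)
      (simp add: lin_on_sum[OF lin_T subspace_M] funpow_T_in op_poly_W_in x del: sum.lessThan_Suc)
  finally show ?thesis .
qed

lemma op_add: "x \<in> M \<Longrightarrow> op (P + Q) x = op P x + op Q x"
proof -
  assume x: "x \<in> M"
  define n where "n = Suc (max (degree P) (degree Q))"
  have "degree (P + Q) < n" "degree P < n" "degree Q < n"
    using degree_add_le_max[of P Q] by (auto simp: n_def)
  then show ?thesis
    using x by (simp add: op_eq_sum_lessThan[of _ n] op_poly_add sum.distrib op_poly_W_in
        lin_on_add[OF lin_on_funpow[OF lin_T]])
qed

lemma op_diff: "x \<in> M \<Longrightarrow> op (P - Q) x = op P x - op Q x"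
proof -
  assume x: "x \<in> M"
  define n where "n = Suc (max (degree P) (degree Q))"
  have "degree (P - Q) < n" "degree P < n" "degree Q < n"
    using degree_diff_le_max[of P Q] by (auto simp: n_def)
  then show ?thesis
    using x by (simp add: op_eq_sum_lessThan[of _ n] op_poly_diff sum_subtractf op_poly_W_in
        lin_on_diff[OF lin_on_funpow[OF lin_T] subspace_M])
qed

lemma op_poly_W_T_commute: "x \<in> M \<Longrightarrow> op_poly sc p W (T x) = T (op_poly sc p W x)"
  by (rule op_poly_commute[OF lin_W lin_T subspace_M, symmetric]) (simp_all add: W_T_commute)

lemma op_smult: "x \<in> M \<Longrightarrow> op (smult p P) x = op_poly sc p W (op P x)"
proof (induction P)
  case 0
  show ?case using lin_on_zero[OF lin_on_op_poly[OF lin_W subspace_M] subspace_M] by simp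
next
  case (pCons q P)
  then show ?case
    by (simp add: op_pCons op_poly_mult[OF lin_W subspace_M] op_in op_poly_W_in lin_on_in[OF lin_T]
        lin_on_add[OF lin_on_op_poly[OF lin_W subspace_M]] op_poly_W_T_commute)
qed

lemma op_smult_const: "x \<in> M \<Longrightarrow> op (smult [:c:] P) x = sc c (op P x)"
  by (simp add: op_smult)

lemma op_mult: "x \<in> M \<Longrightarrow> op (P * Q) x = op P (op Q x)"
proof (induction P)
  case (pCons p P)
  then show ?case by (simp add: op_add op_smult op_pCons op_in)
qed simp

lemma op_scale: "x \<in> M \<Longrightarrow> op P (sc c x) = sc c (op P x)"
  using op_mult[of x P "[:[:c:]:]"] by (simp add: op_const op_smult_const mult.commute)

lemma op_monom: "x \<in> M \<Longrightarrow> op (monom p n) x = (T ^^ n) (op_poly sc p W x)"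
  by (induction n) (simp_all add: monom_0 monom_Suc op_pCons op_const)

lemma op_poly_lift: "x \<in> M \<Longrightarrow> op (poly_lift q) x = op_poly sc q T x"
proof (induction q)
  case (pCons a q)
  then show ?case by (simp add: poly_lift_pCons op_pCons op_poly_pCons[OF lin_T subspace_M])
qed simp

lemma op_shift:
  assumes S: "lin_on sc M S" and x: "x \<in> M" and SW: "\<And>y. y \<in> M \<Longrightarrow> S (W y) = W (S y)"
    and ST: "\<And>y. y \<in> M \<Longrightarrow> S (T y) = T (S y) + sc a (S y)"
  shows "S (op P x) = op (pcompose P [:[:a:], 1:]) (S x)"
proof (induction P)
  case (pCons p P)
  define y where "y = op P x"
  define z where "z = op (pcompose P [:[:a:], 1:]) (S x)"
  have y: "y \<in> M" and z: "z \<in> M"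
    using x by (simp_all add: y_def z_def op_in lin_on_in[OF S])
  have "S (op (pCons p P) x) = op_poly sc p W (S x) + (T z + sc a z)"
    using pCons x y by (simp add: op_pCons lin_on_add[OF S] op_poly_W_in lin_on_in[OF lin_T] ST
        op_poly_commute[OF lin_W S subspace_M] SW y_def z_def)
  also have "\<dots> = op (pcompose (pCons p P) [:[:a:], 1:]) (S x)"
    using x z by (simp add: pcompose_pCons op_add op_mult op_pCons op_const op_1 lin_on_in[OF S]
        op_smult_const z_def[symmetric] add.commute)
  finally show ?case .
qed (simp add: lin_on_zero[OF S subspace_M])

lemma op_eq_0_if_coeffs: "(\<And>k. op_poly sc (coeff P k) W x = 0) \<Longrightarrow> op P x = 0"
  by (simp add: op_poly2_def funpow_T_zero)

lemma op_zero [simp]: "op P 0 = 0"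
  by (rule op_eq_0_if_coeffs) (rule lin_on_zero[OF lin_on_op_poly[OF lin_W subspace_M] subspace_M])

end

section \<open>R(f)-modules\<close>

locale rmodule = complex_vector_space sc for sc :: "complex \<Rightarrow> 'v::ab_group_add \<Rightarrow> 'v" +
  fixes fp u :: "complex poly" and M e f h
  assumes R_module: "R_module fp sc M e f h"
    and fp_eq: "fp = smult (1/2) (pcompose u [:1, 1:] - u)"
begin

abbreviation \<Omega> :: "'v \<Rightarrow> 'v" where
  "\<Omega> \<equiv> omega_op u sc e f h"

(* e_h and f_h are stated in the shape S (T y) = T (S y) + sc a (S y) used by op_poly_shift. *)
lemma subspace_M: "subspace M"
  and lin_e: "lin_on sc M e" and lin_f: "lin_on sc M f" and lin_h: "lin_on sc M h"
  and e_f: "\<And>x. x \<in> M \<Longrightarrow> e (f x) = f (e x) + op_poly sc fp h x"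
  and e_h: "\<And>x. x \<in> M \<Longrightarrow> e (h x) = h (e x) + sc (-1) (e x)"
  and f_h: "\<And>x. x \<in> M \<Longrightarrow> f (h x) = h (f x) + sc 1 (f x)"
  using R_module unfolding R_module_def
  by (simp_all add: scale_minus_left eq_diff_eq diff_eq_eq add.commute)

lemmas e_in = lin_on_in[OF lin_e] and f_in = lin_on_in[OF lin_f] and h_in = lin_on_in[OF lin_h]

lemma op_poly_h_in: "x \<in> M \<Longrightarrow> op_poly sc p h x \<in> M"
  by (rule op_poly_in[OF subspace_M h_in])

lemma e_op_poly_h: "x \<in> M \<Longrightarrow> e (op_poly sc p h x) = op_poly sc (pcompose p [:-1, 1:]) h (e x)"
  by (rule op_poly_shift[OF lin_h lin_e subspace_M _ e_h])

lemma f_op_poly_h: "x \<in> M \<Longrightarrow> f (op_poly sc p h x) = op_poly sc (pcompose p [:1, 1:]) h (f x)"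
  by (rule op_poly_shift[OF lin_h lin_f subspace_M _ f_h])

lemma Omega_in: "x \<in> M \<Longrightarrow> \<Omega> x \<in> M"
  unfolding omega_op_def
  by (intro subspace_add[OF subspace_M] subspace_scale[OF subspace_M] f_in e_in op_poly_h_in)

lemma lin_Omega: "lin_on sc M \<Omega>"
proof -
  have "\<Omega> (x + y) = \<Omega> x + \<Omega> y" "\<Omega> (sc c x) = sc c (\<Omega> x)" if "x \<in> M" "y \<in> M" for x y c
    using that lin_on_op_poly[OF lin_h subspace_M, of "pcompose u [:1, 1:]"]
    by (simp_all add: omega_op_def e_in lin_on_add[OF lin_e] lin_on_add[OF lin_f] lin_on_add
        lin_on_scale[OF lin_e] lin_on_scale[OF lin_f] lin_on_scale scale_right_distrib
        scale_left_commute add_ac)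
  then show ?thesis using Omega_in unfolding lin_on_def by blast
qed

lemma Omega_e: "x \<in> M \<Longrightarrow> e (\<Omega> x) = \<Omega> (e x)"
proof -
  assume x: "x \<in> M"
  have "pcompose (pcompose u [:1, 1:]) [:-1, 1:] = u"
    by (simp add: pcompose_assoc[symmetric] pcompose_pCons)
  then have "e (\<Omega> x) = sc 2 (e (f (e x))) + op_poly sc u h (e x)"
    using x by (simp add: omega_op_def lin_on_add[OF lin_e] lin_on_scale[OF lin_e] e_in f_in
        op_poly_h_in subspace_scale[OF subspace_M] e_op_poly_h)
  then show ?thesis
    using x by (simp add: e_f e_in fp_eq op_poly_smult op_poly_diff omega_op_def
        scale_right_distrib algebra_simps)
qed

lemma Omega_f: "x \<in> M \<Longrightarrow> f (\<Omega> x) = \<Omega> (f x)"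
proof -
  assume x: "x \<in> M"
  have "f (\<Omega> x) = sc 2 (f (f (e x))) + op_poly sc (pcompose (pcompose u [:1, 1:]) [:1, 1:]) h (f x)"
    using x by (simp add: omega_op_def lin_on_add[OF lin_f] lin_on_scale[OF lin_f] e_in f_in
        op_poly_h_in subspace_scale[OF subspace_M] f_op_poly_h)
  moreover have "\<Omega> (f x) = sc 2 (f (f (e x))) + sc 2 (f (op_poly sc fp h x))
      + op_poly sc (pcompose u [:1, 1:]) h (f x)"
    using x by (simp add: omega_op_def e_f lin_on_add[OF lin_f] e_in f_in op_poly_h_in
        scale_right_distrib)
  moreover have "sc 2 (f (op_poly sc fp h x)) + op_poly sc (pcompose u [:1, 1:]) h (f x)
      = op_poly sc (pcompose (pcompose u [:1, 1:]) [:1, 1:]) h (f x)"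
    unfolding f_op_poly_h[OF x]
    by (simp add: fp_eq pcompose_smult pcompose_diff op_poly_smult op_poly_diff scale_scale)
  ultimately show ?thesis by (simp add: add.assoc)
qed

lemma Omega_h: "x \<in> M \<Longrightarrow> h (\<Omega> x) = \<Omega> (h x)"
proof -
  assume x: "x \<in> M"
  have "f (e (h x)) = f (h (e x)) + sc (-1) (f (e x))"
    using x by (simp add: e_h e_in h_in lin_on_add[OF lin_f] lin_on_scale[OF lin_f]
        subspace_scale[OF subspace_M] del: scale_minus_left)
  also have "\<dots> = h (f (e x))"
    using x by (simp add: f_h e_in scale_minus_left)
  finally have "h (f (e x)) = f (e (h x))" ..
  moreover have "h (op_poly sc p h x) = op_poly sc p h (h x)" for p
    by (rule op_poly_commute[OF lin_h lin_h subspace_M x]) simp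
  ultimately show ?thesis
    using x by (simp add: omega_op_def lin_on_add[OF lin_h] lin_on_scale[OF lin_h] f_in e_in
        op_poly_h_in subspace_scale[OF subspace_M])
qed

sublocale commuting_operators sc M \<Omega> h
  by unfold_locales (simp_all add: subspace_M lin_Omega lin_h Omega_h)

lemma e_op: "x \<in> M \<Longrightarrow> e (op P x) = op (pcompose P [:-1, 1:]) (e x)"
proof -
  have "[:[:-1:], 1:] = ([:-1, 1:] :: complex poly poly)" by (simp add: one_pCons)
  then show "x \<in> M \<Longrightarrow> ?thesis" using op_shift[OF lin_e _ Omega_e e_h] by metis
qed

lemma f_op: "x \<in> M \<Longrightarrow> f (op P x) = op (pcompose P [:1, 1:]) (f x)"
  using op_shift[OF lin_f _ Omega_f f_h] by (simp add: one_pCons)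

lemma ZV_is_ideal: "is_ideal (ZV u sc M e f h)"
  unfolding is_ideal_def ZV_def
  by (auto simp: op_poly_add op_poly_mult[OF lin_Omega subspace_M]
      lin_on_zero[OF lin_on_op_poly[OF lin_Omega subspace_M] subspace_M])

end

lemma rmoduleI:
  "R_module fp sc M e f h \<Longrightarrow> fp = smult (1/2) (pcompose u [:1, 1:] - u) \<Longrightarrow> rmodule sc fp u M e f h"
  unfolding rmodule_def rmodule_axioms_def complex_vector_space_def by (simp add: R_module_def)

lemma op_poly_Omega_intertwine:
  assumes R1: "rmodule s1 fp u M1 e1 f1 h1" and R2: "rmodule s2 fp u M2 e2 f2 h2"
    and \<phi>_in: "\<And>x. x \<in> M1 \<Longrightarrow> \<phi> x \<in> M2"
    and \<phi>_add: "\<And>x y. x \<in> M1 \<Longrightarrow> y \<in> M1 \<Longrightarrow> \<phi> (x + y) = \<phi> x + \<phi> y"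
    and \<phi>_scale: "\<And>c x. x \<in> M1 \<Longrightarrow> \<phi> (s1 c x) = s2 c (\<phi> x)"
    and \<phi>_e: "\<And>x. x \<in> M1 \<Longrightarrow> \<phi> (e1 x) = e2 (\<phi> x)"
    and \<phi>_f: "\<And>x. x \<in> M1 \<Longrightarrow> \<phi> (f1 x) = f2 (\<phi> x)"
    and \<phi>_h: "\<And>x. x \<in> M1 \<Longrightarrow> \<phi> (h1 x) = h2 (\<phi> x)"
    and x: "x \<in> M1"
  shows "\<phi> (op_poly s1 p (omega_op u s1 e1 f1 h1) x) = op_poly s2 p (omega_op u s2 e2 f2 h2) (\<phi> x)"
proof -
  interpret R1: rmodule s1 fp u M1 e1 f1 h1 by (rule R1)
  interpret R2: rmodule s2 fp u M2 e2 f2 h2 by (rule R2)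
  have intertwine: "\<phi> (op_poly s1 q T1 y) = op_poly s2 q T2 (\<phi> y)"
    if "lin_on s1 M1 T1" "lin_on s2 M2 T2" "\<And>y. y \<in> M1 \<Longrightarrow> \<phi> (T1 y) = T2 (\<phi> y)" "y \<in> M1"
    for q T1 T2 y
    by (rule op_poly_intertwine[OF R1.complex_vector_space_axioms R2.complex_vector_space_axioms
          R1.subspace_M R2.subspace_M that(1,2) \<phi>_in \<phi>_add \<phi>_scale that(3,4)])
  have "\<phi> (R1.\<Omega> y) = R2.\<Omega> (\<phi> y)" if "y \<in> M1" for y
    using that by (simp add: omega_op_def \<phi>_add \<phi>_scale \<phi>_e \<phi>_f R1.e_in R1.f_in R1.op_poly_h_in
        R1.subspace_scale[OF R1.subspace_M] intertwine[OF R1.lin_h R2.lin_h \<phi>_h])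
  then show ?thesis by (rule intertwine[OF R1.lin_Omega R2.lin_Omega _ x])
qed

lemma ZV_eq_if_R_iso:
  assumes R1: "R_module fp s1 M1 e1 f1 h1" and R2: "R_module fp s2 M2 e2 f2 h2"
    and fp: "fp = smult (1/2) (pcompose u [:1, 1:] - u)"
    and iso: "R_iso s1 M1 e1 f1 h1 s2 M2 e2 f2 h2"
  shows "ZV u s1 M1 e1 f1 h1 = ZV u s2 M2 e2 f2 h2"
proof -
  interpret R1: rmodule s1 fp u M1 e1 f1 h1 by (rule rmoduleI[OF R1 fp])
  interpret R2: rmodule s2 fp u M2 e2 f2 h2 by (rule rmoduleI[OF R2 fp])
  obtain \<phi> where bij: "bij_betw \<phi> M1 M2"
    and \<phi>_add: "\<And>x y. x \<in> M1 \<Longrightarrow> y \<in> M1 \<Longrightarrow> \<phi> (x + y) = \<phi> x + \<phi> y"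
    and \<phi>_scale: "\<And>c x. x \<in> M1 \<Longrightarrow> \<phi> (s1 c x) = s2 c (\<phi> x)"
    and \<phi>_e: "\<And>x. x \<in> M1 \<Longrightarrow> \<phi> (e1 x) = e2 (\<phi> x)"
    and \<phi>_f: "\<And>x. x \<in> M1 \<Longrightarrow> \<phi> (f1 x) = f2 (\<phi> x)"
    and \<phi>_h: "\<And>x. x \<in> M1 \<Longrightarrow> \<phi> (h1 x) = h2 (\<phi> x)"
    using iso unfolding R_iso_def by blast
  have \<phi>_0: "\<phi> 0 = 0"
    using \<phi>_add[of 0 0] R1.subspace_0[OF R1.subspace_M] by simp
  have \<phi>_Omega: "\<phi> (op_poly s1 p R1.\<Omega> x) = op_poly s2 p R2.\<Omega> (\<phi> x)" if "x \<in> M1" for p x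
    by (rule op_poly_Omega_intertwine[OF R1.rmodule_axioms R2.rmodule_axioms bij_betw_apply[OF bij]
          \<phi>_add \<phi>_scale \<phi>_e \<phi>_f \<phi>_h that])
  show ?thesis
  proof (intro set_eqI iffI)
    fix p assume p: "p \<in> ZV u s1 M1 e1 f1 h1"
    have "op_poly s2 p R2.\<Omega> (\<phi> x) = 0" if "x \<in> M1" for x
      using p that by (simp add: \<phi>_Omega[symmetric] \<phi>_0 ZV_def)
    then show "p \<in> ZV u s2 M2 e2 f2 h2"
      using bij_betw_imp_surj_on[OF bij] unfolding ZV_def by blast
  next
    fix p assume p: "p \<in> ZV u s2 M2 e2 f2 h2"
    have "op_poly s1 p R1.\<Omega> x = 0" if x: "x \<in> M1" for x
    proof -
      have "\<phi> (op_poly s1 p R1.\<Omega> x) = \<phi> 0"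
        using p x bij_betw_apply[OF bij x] by (simp add: \<phi>_Omega \<phi>_0 ZV_def)
      then show ?thesis
        using bij x R1.op_poly_W_in[OF x] R1.subspace_0[OF R1.subspace_M]
        unfolding bij_betw_def inj_on_def by blast
    qed
    then show "p \<in> ZV u s1 M1 e1 f1 h1" by (simp add: ZV_def)
  qed
qed

section \<open>Whittaker modules are determined by Z_V\<close>

text \<open>The actions of E, F and H on P, for the vector P(\<Omega>, H) v of a Whittaker module
  with Whittaker vector v; the formula for F comes from \<Omega> v = 2 \<eta> F v + u(H + 1) v.\<close>

definition univ_e :: "complex \<Rightarrow> complex poly poly \<Rightarrow> complex poly poly" where
  "univ_e \<eta> P = smult [:\<eta>:] (pcompose P [:-1, 1:])"

definition univ_f :: "complex \<Rightarrow> complex poly \<Rightarrow> complex poly poly \<Rightarrow> complex poly poly" where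
  "univ_f \<eta> u P =
     smult [:1 / (2 * \<eta>):] (pcompose P [:1, 1:] * ([:[:0, 1:]:] - poly_lift (pcompose u [:1, 1:])))"

definition univ_h :: "complex poly poly \<Rightarrow> complex poly poly" where
  "univ_h P = pCons 0 P"

locale whittaker_module = rmodule +
  fixes \<eta> :: complex and v
  assumes eta_nonzero: "\<eta> \<noteq> 0" and v_in: "v \<in> M" and e_v: "e v = sc \<eta> v"
    and generated: "M = submod_gen sc e f h v"
begin

lemma f_v: "f v = op (smult [:1 / (2 * \<eta>):] ([:[:0, 1:]:] - poly_lift (pcompose u [:1, 1:]))) v"
proof -
  have "op [:[:0, 1:]:] v = sc (2 * \<eta>) (f v) + op_poly sc (pcompose u [:1, 1:]) h v"
    using v_in by (simp add: op_const op_poly_pCons[OF lin_Omega subspace_M] omega_op_def e_v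
        lin_on_scale[OF lin_f] scale_scale)
  then show ?thesis
    using v_in eta_nonzero by (simp add: op_smult_const op_diff op_poly_lift scale_scale)
qed

lemma e_op_v: "e (op P v) = op (univ_e \<eta> P) v"
  using v_in by (simp add: univ_e_def e_op e_v op_scale op_smult_const)

lemma f_op_v: "f (op P v) = op (univ_f \<eta> u P) v"
  using v_in by (simp add: univ_f_def f_op f_v op_mult op_smult_const op_scale op_in mult_smult_right)

lemma h_op_v: "h (op P v) = op (univ_h P) v"
  using v_in by (simp add: univ_h_def op_pCons)

lemma op_v_add: "op P v + op Q v = op (P + Q) v"
  using v_in by (simp add: op_add)

lemma op_v_scale: "sc c (op P v) = op (smult [:c:] P) v"
  using v_in by (simp add: op_smult_const)

lemma range_op_v: "M = range (\<lambda>P. op P v)"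
proof
  show "range (\<lambda>P. op P v) \<subseteq> M" using op_in[OF v_in] by blast
  have "subspace (range (\<lambda>P. op P v))"
  proof (rule subspaceI)
    show "0 \<in> range (\<lambda>P. op P v)" using op_0 by (metis rangeI)
  qed (auto simp: op_v_add op_v_scale)
  moreover have "v \<in> range (\<lambda>P. op P v)" using op_1[of v] by (metis rangeI)
  ultimately show "M \<subseteq> range (\<lambda>P. op P v)"
    unfolding generated by (rule submod_gen_least) (auto simp: e_op_v f_op_v h_op_v)
qed

lemma ZV_if_annihilates_v:
  assumes "op_poly sc p \<Omega> v = 0"
  shows "p \<in> ZV u sc M e f h"
  unfolding ZV_def
proof (intro CollectI ballI)
  fix x assume "x \<in> M"
  then obtain P where x: "x = op P v" using range_op_v by blast
  have "op_poly sc p \<Omega> x = op (P * [:p:]) v"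
    using v_in op_smult[of v p P] by (simp add: x mult.commute)
  also have "\<dots> = op P (op_poly sc p \<Omega> v)"
    using v_in by (simp only: op_mult op_const)
  also have "\<dots> = 0"
    using assms by simp
  finally show "op_poly sc p \<Omega> x = 0" .
qed

lemma op_v_shift_eq_0: "op P v = 0 \<Longrightarrow> op (pcompose P [:-1, 1:]) v = 0"
  using e_op_v[of P] eta_nonzero lin_on_zero[OF lin_e subspace_M]
  by (simp add: univ_e_def op_v_scale[symmetric])

lemma coeff_in_ZV_if_op_v_eq_0:
  assumes "op P v = 0"
  shows "coeff P k \<in> ZV u sc M e f h"
  using assms
proof (induction "degree P" arbitrary: P k rule: less_induct)
  case less
  note Z = ZV_is_ideal
  show ?case
  proof (cases "degree P")
    case 0
    then have P: "P = [:coeff P 0:]" by (rule degree_0_id[symmetric])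
    then have "coeff P 0 \<in> ZV u sc M e f h"
      using less.prems by (metis op_const ZV_if_annihilates_v)
    then show ?thesis using is_ideal_zero[OF Z] by (subst P) (cases k, simp_all)
  next
    case (Suc m)
    define Q where "Q = pcompose P [:-1, 1:] - P"
    have deg_Q: "degree Q \<le> m" and coeff_Q: "coeff Q m = - (of_nat (Suc m) * lead_coeff P)"
      using pcompose_shift_diff[OF Suc] by (simp_all add: Q_def)
    have "op Q v = 0"
      using less.prems v_in by (simp add: Q_def op_diff op_v_shift_eq_0)
    then have "coeff Q m \<in> ZV u sc M e f h"
      using less.hyps[of Q m] deg_Q Suc by simp
    then have "smult (- 1 / of_nat (Suc m)) (coeff Q m) \<in> ZV u sc M e f h"
      by (rule is_ideal_smult[OF Z])
    then have lc: "lead_coeff P \<in> ZV u sc M e f h"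
      by (simp add: coeff_Q of_nat_poly del: of_nat_Suc)
    define P' where "P' = P - monom (lead_coeff P) (Suc m)"
    have "op (monom (lead_coeff P) (Suc m)) v = 0"
      using lc v_in by (simp add: op_monom ZV_def funpow_T_zero del: funpow.simps)
    then have "op P' v = 0"
      using less.prems v_in by (simp add: P'_def op_diff)
    moreover have "degree P' < degree P"
      using Suc by (intro le_less_trans[OF degree_le[of m]])
        (auto simp: P'_def coeff_monom coeff_eq_0 Suc_le_eq)
    ultimately have "coeff P' k \<in> ZV u sc M e f h"
      using less.hyps by blast
    moreover have "coeff (monom (lead_coeff P) (Suc m)) k \<in> ZV u sc M e f h"
      using lc is_ideal_zero[OF Z] by (simp add: coeff_monom)
    ultimately show ?thesis
      using is_ideal_add[OF Z] by (fastforce simp: P'_def)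
  qed
qed

lemma op_v_eq_0_iff: "op P v = 0 \<longleftrightarrow> (\<forall>k. coeff P k \<in> ZV u sc M e f h)"
  using coeff_in_ZV_if_op_v_eq_0 op_eq_0_if_coeffs v_in by (auto simp: ZV_def)

end

lemma whittaker_moduleE:
  assumes "whittaker fp \<eta> sc M e f h" "\<eta> \<noteq> 0" "fp = smult (1/2) (pcompose u [:1, 1:] - u)"
  obtains v where "whittaker_module sc fp u M e f h \<eta> v"
  using assms rmoduleI unfolding whittaker_def whittaker_module_def whittaker_module_axioms_def
  by metis

lemma R_iso_if_ZV_eq:
  assumes W1: "whittaker_module s1 fp u M1 e1 f1 h1 \<eta> v1"
    and W2: "whittaker_module s2 fp u M2 e2 f2 h2 \<eta> v2"
    and ZV: "ZV u s1 M1 e1 f1 h1 = ZV u s2 M2 e2 f2 h2"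
  shows "R_iso s1 M1 e1 f1 h1 s2 M2 e2 f2 h2"
proof -
  interpret W1: whittaker_module s1 fp u M1 e1 f1 h1 \<eta> v1 by (rule W1)
  interpret W2: whittaker_module s2 fp u M2 e2 f2 h2 \<eta> v2 by (rule W2)
  have op_eq_iff: "W1.op P v1 = W1.op Q v1 \<longleftrightarrow> W2.op P v2 = W2.op Q v2" for P Q
  proof -
    have "W1.op P v1 = W1.op Q v1 \<longleftrightarrow> W1.op (P - Q) v1 = 0"
      by (simp add: W1.op_diff W1.v_in)
    also have "\<dots> \<longleftrightarrow> W2.op (P - Q) v2 = 0"
      by (simp add: W1.op_v_eq_0_iff W2.op_v_eq_0_iff ZV)
    also have "\<dots> \<longleftrightarrow> W2.op P v2 = W2.op Q v2"
      by (simp add: W2.op_diff W2.v_in)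
    finally show ?thesis .
  qed
  define \<phi> where "\<phi> x = W2.op (inv (\<lambda>P. W1.op P v1) x) v2" for x
  have \<phi>_op: "\<phi> (W1.op P v1) = W2.op P v2" for P
    unfolding \<phi>_def using op_eq_iff f_inv_into_f[of "W1.op P v1" "\<lambda>P. W1.op P v1" UNIV] by blast
  note op_v_simps = W1.op_v_add W1.op_v_scale W1.e_op_v W1.f_op_v W1.h_op_v
    W2.op_v_add W2.op_v_scale W2.e_op_v W2.f_op_v W2.h_op_v
  note M1 = W1.range_op_v and M2 = W2.range_op_v
  have "bij_betw \<phi> M1 M2"
    unfolding M1 M2 by (rule bij_betw_imageI) (auto simp: inj_on_def \<phi>_op op_eq_iff image_image)
  moreover have "\<forall>x\<in>M1. \<forall>y\<in>M1. \<phi> (x + y) = \<phi> x + \<phi> y"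
    by (auto simp: M1 \<phi>_op op_v_simps)
  moreover have "\<forall>c. \<forall>x\<in>M1. \<phi> (s1 c x) = s2 c (\<phi> x)"
    by (auto simp: M1 \<phi>_op op_v_simps)
  moreover have "\<forall>x\<in>M1. \<phi> (e1 x) = e2 (\<phi> x) \<and> \<phi> (f1 x) = f2 (\<phi> x) \<and> \<phi> (h1 x) = h2 (\<phi> x)"
    by (auto simp: M1 \<phi>_op op_v_simps)
  ultimately show ?thesis
    unfolding R_iso_def by blast
qed

section \<open>A Whittaker module with prescribed Z_V\<close>

lemma univ_h_univ_e: "univ_h (univ_e \<eta> P) - univ_e \<eta> (univ_h P) = univ_e \<eta> P"
  by (simp add: univ_h_def univ_e_def pcompose_pCons mult_pCons_left smult_diff_right)

lemma univ_h_univ_f: "univ_h (univ_f \<eta> u P) - univ_f \<eta> u (univ_h P) = - univ_f \<eta> u P"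
  by (simp add: univ_h_def univ_f_def pcompose_pCons mult_pCons_left distrib_right smult_add_right)

lemma univ_e_univ_f_eq:
  "\<eta> \<noteq> 0 \<Longrightarrow> univ_e \<eta> (univ_f \<eta> u P) = smult [:1/2:] (P * ([:[:0, 1:]:] - poly_lift u))"
proof -
  assume "\<eta> \<noteq> 0"
  have "poly_lift (pcompose u [:1, 1:]) \<circ>\<^sub>p [:-1, 1:] = poly_lift u"
    using poly_lift_pcompose[of "pcompose u [:1, 1:]" "[:-1, 1:]"]
    by (simp add: pcompose_assoc[symmetric] pcompose_pCons poly_lift_pCons one_pCons)
  then show ?thesis
    using \<open>\<eta> \<noteq> 0\<close> by (simp add: univ_e_def univ_f_def pcompose_smult pcompose_mult pcompose_diff
        pcompose_assoc[symmetric] pcompose_pCons)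
qed

lemma univ_f_univ_e_eq:
  "\<eta> \<noteq> 0 \<Longrightarrow>
    univ_f \<eta> u (univ_e \<eta> P) = smult [:1/2:] (P * ([:[:0, 1:]:] - poly_lift (pcompose u [:1, 1:])))"
  by (simp add: univ_e_def univ_f_def pcompose_smult pcompose_assoc[symmetric] pcompose_pCons)

lemma univ_e_univ_f:
  "\<eta> \<noteq> 0 \<Longrightarrow> univ_e \<eta> (univ_f \<eta> u P) - univ_f \<eta> u (univ_e \<eta> P)
    = poly_lift (smult (1/2) (pcompose u [:1, 1:] - u)) * P"
  by (simp add: univ_e_univ_f_eq univ_f_univ_e_eq poly_lift_smult poly_lift_diff algebra_simps
      smult_diff_right)

definition coeff_mod :: "complex poly \<Rightarrow> complex poly poly \<Rightarrow> complex poly poly" where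
  "coeff_mod g P = map_poly (\<lambda>c. c mod g) P"

lemma coeff_coeff_mod: "coeff (coeff_mod g P) k = coeff P k mod g"
  by (simp add: coeff_mod_def coeff_map_poly)

lemma coeff_mod_0 [simp]: "coeff_mod g 0 = 0"
  by (simp add: coeff_mod_def)

lemma coeff_mod_idem [simp]: "coeff_mod g (coeff_mod g P) = coeff_mod g P"
  by (rule poly_eqI) (simp add: coeff_coeff_mod)

lemma coeff_mod_add: "coeff_mod g (P + Q) = coeff_mod g P + coeff_mod g Q"
  and coeff_mod_diff: "coeff_mod g (P - Q) = coeff_mod g P - coeff_mod g Q"
  and coeff_mod_smult_const: "coeff_mod g (smult [:c:] P) = smult [:c:] (coeff_mod g P)"
  by (rule poly_eqI, simp add: coeff_coeff_mod poly_mod_add_left poly_mod_diff_left mod_smult_left)+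

lemma coeff_mod_pCons: "coeff_mod g (pCons a P) = pCons (a mod g) (coeff_mod g P)"
  by (simp add: coeff_mod_def map_poly_pCons)

lemma coeff_mod_smult_mod: "coeff_mod g (smult q (coeff_mod g P)) = coeff_mod g (smult q P)"
  by (rule poly_eqI) (simp add: coeff_coeff_mod mod_mult_right_eq)

lemma coeff_mod_mult_mod: "coeff_mod g (coeff_mod g P * Q) = coeff_mod g (P * Q)"
proof (rule poly_eqI)
  fix n
  have "(\<Sum>i\<le>n. (coeff P i mod g) * coeff Q (n - i)) mod g
      = (\<Sum>i\<le>n. ((coeff P i mod g) * coeff Q (n - i)) mod g) mod g"
    by (rule mod_sum_eq[symmetric])
  also have "\<dots> = (\<Sum>i\<le>n. coeff P i * coeff Q (n - i)) mod g"
    by (simp add: mod_mult_left_eq mod_sum_eq)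
  finally show "coeff (coeff_mod g (coeff_mod g P * Q)) n = coeff (coeff_mod g (P * Q)) n"
    by (simp add: coeff_coeff_mod coeff_mult)
qed

lemma coeff_mod_pcompose_mod: "coeff_mod g (pcompose (coeff_mod g P) L) = coeff_mod g (pcompose P L)"
proof (induction P)
  case (pCons a P)
  have "coeff_mod g (L * pcompose (coeff_mod g P) L) = coeff_mod g (L * pcompose P L)"
    using pCons.IH coeff_mod_mult_mod[of g _ L] by (metis mult.commute)
  then show ?case
    by (simp add: coeff_mod_pCons pcompose_pCons coeff_mod_add coeff_mod_pCons[of g a 0, simplified])
qed simp

lemma coeff_mod_univ_e: "coeff_mod g (univ_e \<eta> (coeff_mod g P)) = coeff_mod g (univ_e \<eta> P)"
  by (simp add: univ_e_def coeff_mod_smult_const coeff_mod_pcompose_mod)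

lemma coeff_mod_univ_f: "coeff_mod g (univ_f \<eta> u (coeff_mod g P)) = coeff_mod g (univ_f \<eta> u P)"
  by (metis univ_f_def coeff_mod_smult_const coeff_mod_pcompose_mod coeff_mod_mult_mod)

lemma coeff_mod_univ_h: "coeff_mod g (univ_h (coeff_mod g P)) = coeff_mod g (univ_h P)"
  by (simp add: univ_h_def coeff_mod_pCons)

definition const_smult :: "complex \<Rightarrow> complex poly poly \<Rightarrow> complex poly poly" where
  "const_smult c P = smult [:c:] P"

text \<open>Normal forms of (C[\<Omega>]/(g))[H]; for g = 0 (where c mod 0 = c) this is all of
  C[\<Omega>][H].\<close>

definition quot_space :: "complex poly \<Rightarrow> complex poly poly set" where
  "quot_space g = range (coeff_mod g)"

definition quot_e :: "complex poly \<Rightarrow> complex \<Rightarrow> complex poly poly \<Rightarrow> complex poly poly" where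
  "quot_e g \<eta> P = coeff_mod g (univ_e \<eta> P)"

definition quot_f :: "complex poly \<Rightarrow> complex \<Rightarrow> complex poly \<Rightarrow> complex poly poly \<Rightarrow> complex poly poly" where
  "quot_f g \<eta> u P = coeff_mod g (univ_f \<eta> u P)"

definition quot_h :: "complex poly \<Rightarrow> complex poly poly \<Rightarrow> complex poly poly" where
  "quot_h g P = coeff_mod g (univ_h P)"

lemma quot_space_iff: "P \<in> quot_space g \<longleftrightarrow> coeff_mod g P = P"
  unfolding quot_space_def by (metis coeff_mod_idem rangeI image_iff)

lemma coeff_mod_in_quot_space: "coeff_mod g P \<in> quot_space g"
  by (simp add: quot_space_def)

lemma complex_vector_space_const_smult: "complex_vector_space const_smult"
  unfolding complex_vector_space_def vector_space_def const_smult_def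
  by (simp add: smult_add_right smult_add_left[symmetric] mult.commute flip: one_pCons)

interpretation poly_poly: complex_vector_space const_smult
  by (rule complex_vector_space_const_smult)

lemma subspace_quot_space: "poly_poly.subspace (quot_space g)"
  by (rule poly_poly.subspaceI)
    (auto simp: quot_space_iff const_smult_def coeff_mod_add coeff_mod_smult_const)

lemma lin_on_coeff_mod:
  assumes "\<And>P Q. A (P + Q) = A P + A Q" "\<And>c P. A (smult [:c:] P) = smult [:c:] (A P)"
  shows "lin_on const_smult (quot_space g) (\<lambda>P. coeff_mod g (A P))"
  using assms unfolding lin_on_def quot_space_def const_smult_def
  by (simp add: coeff_mod_add coeff_mod_smult_const)

lemma lin_quot_e: "lin_on const_smult (quot_space g) (quot_e g \<eta>)"
  unfolding quot_e_def[abs_def]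
  by (rule lin_on_coeff_mod) (simp_all add: univ_e_def pcompose_add pcompose_smult smult_add_right ac_simps)

lemma lin_quot_f: "lin_on const_smult (quot_space g) (quot_f g \<eta> u)"
  unfolding quot_f_def[abs_def]
  by (rule lin_on_coeff_mod)
    (simp_all add: univ_f_def pcompose_add pcompose_smult smult_add_right distrib_right ac_simps)

lemma lin_quot_h: "lin_on const_smult (quot_space g) (quot_h g)"
  unfolding quot_h_def[abs_def] by (rule lin_on_coeff_mod) (simp_all add: univ_h_def)

lemma op_poly_quot_h:
  "P \<in> quot_space g \<Longrightarrow> op_poly const_smult p (quot_h g) P = coeff_mod g (poly_lift p * P)"
proof (induction p)
  case (pCons a p)
  have "op_poly const_smult (pCons a p) (quot_h g) P
      = const_smult a P + quot_h g (op_poly const_smult p (quot_h g) P)"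
    by (rule poly_poly.op_poly_pCons[OF lin_quot_h subspace_quot_space pCons.prems])
  also have "\<dots> = const_smult a P + quot_h g (coeff_mod g (poly_lift p * P))"
    by (simp only: pCons.IH[OF pCons.prems])
  also have "\<dots> = coeff_mod g (poly_lift (pCons a p) * P)"
    using pCons.prems by (simp add: poly_lift_pCons const_smult_def quot_h_def univ_h_def
        coeff_mod_pCons coeff_mod_add coeff_mod_smult_const quot_space_iff)
  finally show ?case .
qed simp

lemma R_module_quot:
  assumes "\<eta> \<noteq> 0"
  shows "R_module (smult (1/2) (pcompose u [:1, 1:] - u))
    const_smult (quot_space g) (quot_e g \<eta>) (quot_f g \<eta> u) (quot_h g)"
  unfolding R_module_def
proof (intro conjI ballI)
  fix P assume P: "P \<in> quot_space g"
  show "quot_e g \<eta> (quot_f g \<eta> u P) - quot_f g \<eta> u (quot_e g \<eta> P)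
      = op_poly const_smult (smult (1/2) (pcompose u [:1, 1:] - u)) (quot_h g) P"
    using P by (simp add: quot_e_def quot_f_def coeff_mod_univ_e coeff_mod_univ_f op_poly_quot_h
        univ_e_univ_f[OF assms] flip: coeff_mod_diff)
  show "quot_h g (quot_e g \<eta> P) - quot_e g \<eta> (quot_h g P) = quot_e g \<eta> P"
    by (simp add: quot_e_def quot_h_def coeff_mod_univ_e coeff_mod_univ_h univ_h_univ_e
        flip: coeff_mod_diff)
  show "quot_h g (quot_f g \<eta> u P) - quot_f g \<eta> u (quot_h g P) = - quot_f g \<eta> u P"
    using coeff_mod_diff[of g 0] by (simp add: quot_f_def quot_h_def coeff_mod_univ_f coeff_mod_univ_h
        univ_h_univ_f flip: coeff_mod_diff)
qed (simp_all add: complex_vector_space_const_smult[unfolded complex_vector_space_def]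
    subspace_quot_space lin_quot_e lin_quot_f lin_quot_h)

locale quotient_model =
  fixes g :: "complex poly" and \<eta> :: complex and u :: "complex poly"
  assumes eta_nonzero: "\<eta> \<noteq> 0"
begin

sublocale rmodule const_smult "smult (1/2) (pcompose u [:1, 1:] - u)" u
    "quot_space g" "quot_e g \<eta>" "quot_f g \<eta> u" "quot_h g"
  by (rule rmoduleI[OF R_module_quot[OF eta_nonzero] refl])

lemma Omega_quot: "P \<in> quot_space g \<Longrightarrow> \<Omega> P = coeff_mod g ([:[:0, 1:]:] * P)"
proof -
  assume P: "P \<in> quot_space g"
  define L where "L = poly_lift (pcompose u [:1, 1:])"
  have "\<Omega> P = smult [:2:] (coeff_mod g (smult [:1/2:] (P * ([:[:0, 1:]:] - L)))) + coeff_mod g (L * P)"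
    using P by (simp add: omega_op_def const_smult_def quot_e_def quot_f_def coeff_mod_univ_f
        univ_f_univ_e_eq[OF eta_nonzero] op_poly_quot_h L_def)
  also have "\<dots> = coeff_mod g (P * ([:[:0, 1:]:] - L) + L * P)"
    by (simp add: coeff_mod_smult_const coeff_mod_add flip: one_pCons)
  finally show ?thesis by (simp add: algebra_simps)
qed

lemma op_poly_Omega_quot:
  "P \<in> quot_space g \<Longrightarrow> op_poly const_smult p \<Omega> P = coeff_mod g ([:p:] * P)"
proof (induction p)
  case (pCons a p)
  have "op_poly const_smult (pCons a p) \<Omega> P = const_smult a P + \<Omega> (op_poly const_smult p \<Omega> P)"
    by (rule poly_poly.op_poly_pCons[OF lin_Omega subspace_M pCons.prems])
  also have "\<dots> = smult [:a:] P + coeff_mod g ([:[:0, 1:]:] * coeff_mod g ([:p:] * P))"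
    by (simp only: pCons.IH[OF pCons.prems] const_smult_def Omega_quot[OF coeff_mod_in_quot_space])
  also have "\<dots> = coeff_mod g ([:pCons a p:] * P)"
    using pCons.prems smult_add_left[of "[:a:]" "pCons 0 p" P]
    by (simp add: quot_space_iff coeff_mod_smult_mod coeff_mod_add coeff_mod_smult_const)
  finally show ?case .
qed simp

lemma op_quot_generator: "op P (coeff_mod g 1) = coeff_mod g P"
proof (induction P)
  case (pCons p P)
  have "op (pCons p P) (coeff_mod g 1) = op_poly const_smult p \<Omega> (coeff_mod g 1) + quot_h g (coeff_mod g P)"
    by (simp only: op_pCons[OF coeff_mod_in_quot_space] pCons.IH)
  also have "\<dots> = coeff_mod g (pCons p P)"
    by (simp add: quot_space_def op_poly_Omega_quot quot_h_def univ_h_def coeff_mod_pCons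
        coeff_mod_smult_mod coeff_mod_add flip: one_pCons)
  finally show ?case .
qed simp

lemma quot_space_generated:
  "quot_space g = submod_gen const_smult (quot_e g \<eta>) (quot_f g \<eta> u) (quot_h g) (coeff_mod g 1)"
  (is "_ = ?N")
proof
  show "?N \<subseteq> quot_space g"
    by (rule poly_poly.submod_gen_least[OF subspace_M]) (simp_all add: coeff_mod_in_quot_space e_in f_in h_in)
  have N: "poly_poly.subspace ?N" by (rule poly_poly.submod_gen_subspace)
  have closed: "quot_e g \<eta> y \<in> ?N" "quot_f g \<eta> u y \<in> ?N" "quot_h g y \<in> ?N" if "y \<in> ?N" for y
    using poly_poly.submod_gen_closed[OF that] by blast+
  have "\<Omega> y \<in> ?N" if "y \<in> ?N" for y
    unfolding omega_op_def using that
    by (intro poly_poly.subspace_add[OF N] poly_poly.subspace_scale[OF N] poly_poly.op_poly_in[OF N] closed)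
  then have "op P (coeff_mod g 1) \<in> ?N" for P
    by (rule op_in_subspace[OF N _ closed(3) poly_poly.submod_gen_in])
  then show "quot_space g \<subseteq> ?N"
    unfolding quot_space_def by (metis image_subsetI op_quot_generator)
qed

lemma whittaker_quot:
  "whittaker (smult (1/2) (pcompose u [:1, 1:] - u)) \<eta> const_smult
     (quot_space g) (quot_e g \<eta>) (quot_f g \<eta> u) (quot_h g)"
proof -
  have "quot_e g \<eta> (coeff_mod g 1) = const_smult \<eta> (coeff_mod g 1)"
    using coeff_mod_univ_e[of g \<eta> 1] coeff_mod_smult_const[of g \<eta> 1]
    by (simp add: quot_e_def univ_e_def const_smult_def pcompose_1)
  then show ?thesis
    unfolding whittaker_def using R_module quot_space_generated by (auto simp: quot_space_def)
qed

lemma ZV_quot: "ZV u const_smult (quot_space g) (quot_e g \<eta>) (quot_f g \<eta> u) (quot_h g) = {p. g dvd p}"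
proof (intro set_eqI iffI)
  fix p assume "p \<in> ZV u const_smult (quot_space g) (quot_e g \<eta>) (quot_f g \<eta> u) (quot_h g)"
  then have "coeff_mod g ([:p:] * coeff_mod g 1) = 0"
    by (simp add: ZV_def quot_space_def op_poly_Omega_quot)
  then show "p \<in> {p. g dvd p}"
    using coeff_coeff_mod[of g "[:p:]" 0] coeff_mod_mult_mod[of g 1 "[:p:]"]
    by (simp add: mult.commute mod_eq_0_iff_dvd)
next
  fix p assume "p \<in> {p. g dvd p}"
  then have "coeff_mod g ([:p:] * P) = 0" for P
    by (intro poly_eqI) (simp add: coeff_coeff_mod mod_eq_0_iff_dvd)
  then show "p \<in> ZV u const_smult (quot_space g) (quot_e g \<eta>) (quot_f g \<eta> u) (quot_h g)"
    by (simp add: ZV_def op_poly_Omega_quot)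
qed

end

locale linear_embedding =
  V: complex_vector_space sc + V': complex_vector_space sc'
  for sc :: "complex \<Rightarrow> 'v::ab_group_add \<Rightarrow> 'v" and sc' :: "complex \<Rightarrow> 'w::ab_group_add \<Rightarrow> 'w" +
  fixes M :: "'v set" and \<iota> :: "'v \<Rightarrow> 'w"
  assumes subspace_M: "V.subspace M"
    and \<iota>_add: "\<And>x y. x \<in> M \<Longrightarrow> y \<in> M \<Longrightarrow> \<iota> (x + y) = \<iota> x + \<iota> y"
    and \<iota>_scale: "\<And>c x. x \<in> M \<Longrightarrow> \<iota> (sc c x) = sc' c (\<iota> x)"
    and inj_\<iota>: "inj_on \<iota> M"
begin

definition push :: "('v \<Rightarrow> 'v) \<Rightarrow> 'w \<Rightarrow> 'w" where
  "push T y = \<iota> (T (inv_into M \<iota> y))"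

lemma push_apply: "x \<in> M \<Longrightarrow> push T (\<iota> x) = \<iota> (T x)"
  by (simp add: push_def inj_\<iota>)

lemma \<iota>_zero: "\<iota> 0 = 0"
  using \<iota>_add[of 0 0] V.subspace_0[OF subspace_M] by simp

lemma \<iota>_diff: "x \<in> M \<Longrightarrow> y \<in> M \<Longrightarrow> \<iota> (x - y) = \<iota> x - \<iota> y"
  using \<iota>_add[of "x - y" y] V.subspace_diff[OF subspace_M] by (simp add: eq_diff_eq)

lemma subspace_image: "V'.subspace (\<iota> ` M)"
proof (rule V'.subspaceI)
  show "0 \<in> \<iota> ` M" using \<iota>_zero V.subspace_0[OF subspace_M] by (metis imageI)
  show "x + y \<in> \<iota> ` M" if xy: "x \<in> \<iota> ` M" "y \<in> \<iota> ` M" for x y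
  proof -
    obtain a b where "a \<in> M" "b \<in> M" "x = \<iota> a" "y = \<iota> b" using xy by blast
    then show ?thesis by (simp add: V.subspace_add[OF subspace_M] flip: \<iota>_add)
  qed
  show "sc' c x \<in> \<iota> ` M" if x: "x \<in> \<iota> ` M" for c x
  proof -
    obtain a where "a \<in> M" "x = \<iota> a" using x by blast
    then show ?thesis by (simp add: V.subspace_scale[OF subspace_M] flip: \<iota>_scale)
  qed
qed

lemma lin_on_push: "lin_on sc M T \<Longrightarrow> lin_on sc' (\<iota> ` M) (push T)"
  unfolding lin_on_def
  by (auto simp: push_apply V.subspace_add[OF subspace_M] V.subspace_scale[OF subspace_M]
      simp flip: \<iota>_add \<iota>_scale)

lemma op_poly_push:
  "lin_on sc M T \<Longrightarrow> x \<in> M \<Longrightarrow> \<iota> (op_poly sc p T x) = op_poly sc' p (push T) (\<iota> x)"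
  by (rule op_poly_intertwine[OF V.complex_vector_space_axioms V'.complex_vector_space_axioms
        subspace_M subspace_image _ lin_on_push]) (simp_all add: \<iota>_add \<iota>_scale push_apply)

lemma R_module_push:
  assumes R: "R_module fp sc M e f h"
  shows "R_module fp sc' (\<iota> ` M) (push e) (push f) (push h)"
proof -
  have lin: "lin_on sc M e" "lin_on sc M f" "lin_on sc M h" using R by (simp_all add: R_module_def)
  note in_M = V.lin_on_in[OF lin(1)] V.lin_on_in[OF lin(2)] V.lin_on_in[OF lin(3)]
  have "push e (push f (\<iota> x)) - push f (push e (\<iota> x)) = op_poly sc' fp (push h) (\<iota> x)"
    "push h (push e (\<iota> x)) - push e (push h (\<iota> x)) = push e (\<iota> x)"
    "push h (push f (\<iota> x)) - push f (push h (\<iota> x)) = - push f (\<iota> x)"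
    if x: "x \<in> M" for x
  proof -
    have rel: "e (f x) - f (e x) = op_poly sc fp h x" "h (e x) - e (h x) = e x"
      "h (f x) - f (h x) = - f x"
      using R x by (simp_all add: R_module_def)
    have "\<iota> (- y) = - \<iota> y" if "y \<in> M" for y
      using \<iota>_diff[of 0 y] that \<iota>_zero V.subspace_0[OF subspace_M] by simp
    then show "push e (push f (\<iota> x)) - push f (push e (\<iota> x)) = op_poly sc' fp (push h) (\<iota> x)"
      "push h (push e (\<iota> x)) - push e (push h (\<iota> x)) = push e (\<iota> x)"
      "push h (push f (\<iota> x)) - push f (push h (\<iota> x)) = - push f (\<iota> x)"
      using x in_M by (simp_all add: push_apply rel op_poly_push[OF lin(3) x] flip: \<iota>_diff)
  qed
  then show ?thesis
    unfolding R_module_def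
    using V'.vector_space_axioms subspace_image lin_on_push[OF lin(1)] lin_on_push[OF lin(2)]
      lin_on_push[OF lin(3)] by blast
qed

lemma image_submod_gen:
  assumes lin: "lin_on sc M e" "lin_on sc M f" "lin_on sc M h"
    and v: "v \<in> M" and generated: "M = submod_gen sc e f h v"
  shows "\<iota> ` M = submod_gen sc' (push e) (push f) (push h) (\<iota> v)" (is "_ = ?S")
proof
  note in_M = V.lin_on_in[OF lin(1)] V.lin_on_in[OF lin(2)] V.lin_on_in[OF lin(3)]
  show "?S \<subseteq> \<iota> ` M"
    by (rule V'.submod_gen_least[OF subspace_image]) (auto simp: v push_apply in_M)
  have S: "V'.subspace ?S" by (rule V'.submod_gen_subspace)
  have "V.subspace {x \<in> M. \<iota> x \<in> ?S}"
    using V.subspace_0[OF subspace_M] V'.subspace_0[OF S] V.subspace_add[OF subspace_M]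
      V'.subspace_add[OF S] V.subspace_scale[OF subspace_M] V'.subspace_scale[OF S]
    by (intro V.subspaceI) (auto simp: \<iota>_zero \<iota>_add \<iota>_scale)
  then have "submod_gen sc e f h v \<subseteq> {x \<in> M. \<iota> x \<in> ?S}"
    by (rule V.submod_gen_least)
      (use v V'.submod_gen_in V'.submod_gen_closed in \<open>auto simp: in_M push_apply[symmetric]\<close>)
  then show "\<iota> ` M \<subseteq> ?S"
    using generated by auto
qed

lemma whittaker_push:
  "whittaker fp \<eta> sc M e f h \<Longrightarrow> whittaker fp \<eta> sc' (\<iota> ` M) (push e) (push f) (push h)"
  unfolding whittaker_def
  using R_module_push image_submod_gen \<iota>_scale push_apply
  by (metis R_module_def image_eqI)

lemma R_iso_push: "R_iso sc M e f h sc' (\<iota> ` M) (push e) (push f) (push h)"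
  unfolding R_iso_def
  using inj_on_imp_bij_betw[OF inj_\<iota>] \<iota>_add \<iota>_scale push_apply by metis

end

definition encode :: "complex poly poly \<Rightarrow> complex poly" where
  "encode P = Abs_poly (\<lambda>n. case prod_decode n of (i, j) \<Rightarrow> coeff (coeff P i) j)"

lemma coeff_encode: "coeff (encode P) n = (case prod_decode n of (i, j) \<Rightarrow> coeff (coeff P i) j)"
proof -
  define K where "K = (\<Sum>i\<le>degree P. degree (coeff P i))"
  have "{n. (case prod_decode n of (i, j) \<Rightarrow> coeff (coeff P i) j) \<noteq> 0}
      \<subseteq> prod_encode ` ({..degree P} \<times> {..K})"
  proof
    fix n assume "n \<in> {n. (case prod_decode n of (i, j) \<Rightarrow> coeff (coeff P i) j) \<noteq> 0}"
    moreover obtain i j where ij: "prod_decode n = (i, j)" by fastforce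
    ultimately have nz: "coeff (coeff P i) j \<noteq> 0" by simp
    then have i: "i \<le> degree P" by (metis coeff_0 le_degree)
    have "j \<le> degree (coeff P i)" using nz le_degree by blast
    also have "\<dots> \<le> K" unfolding K_def using i by (intro member_le_sum) auto
    finally show "n \<in> prod_encode ` ({..degree P} \<times> {..K})"
      using i ij by (metis SigmaI atMost_iff image_eqI prod_decode_inverse)
  qed
  then have "\<forall>\<^sub>\<infinity> n. (case prod_decode n of (i, j) \<Rightarrow> coeff (coeff P i) j) = 0"
    by (simp add: MOST_iff_cofinite finite_subset)
  then show ?thesis by (simp add: encode_def Abs_poly_inverse)
qed

lemma encode_add: "encode (P + Q) = encode P + encode Q"
  by (rule poly_eqI) (simp add: coeff_encode split: prod.splits)

lemma encode_const_smult: "encode (const_smult c P) = smult c (encode P)"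
  by (rule poly_eqI) (simp add: coeff_encode const_smult_def split: prod.splits)

lemma inj_encode: "inj encode"
proof (rule injI)
  fix P Q assume "encode P = encode Q"
  then have "coeff (encode P) (prod_encode (i, j)) = coeff (encode Q) (prod_encode (i, j))" for i j
    by simp
  then show "P = Q" by (intro poly_eqI) (simp add: coeff_encode)
qed

lemma complex_vector_space_smult:
  "complex_vector_space (smult :: complex \<Rightarrow> complex poly \<Rightarrow> complex poly)"
  unfolding complex_vector_space_def vector_space_def by (simp add: smult_add_right smult_add_left)

lemma whittaker_with_ZV:
  assumes "\<eta> \<noteq> 0" and "is_ideal I"
  obtains M e f h where "whittaker (smult (1/2) (pcompose u [:1, 1:] - u)) \<eta> smult M e f h"
    and "ZV u smult M e f h = I"
proof -
  obtain g where g: "I = {p. g dvd p}" using ideal_eq_multiples[OF assms(2)] .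
  interpret Q: quotient_model g \<eta> u by unfold_locales (rule assms(1))
  interpret E: linear_embedding const_smult smult "quot_space g" encode
    by (intro linear_embedding.intro linear_embedding_axioms.intro complex_vector_space_const_smult
        complex_vector_space_smult Q.subspace_M encode_add encode_const_smult
        inj_on_subset[OF inj_encode] subset_UNIV)
  have "ZV u smult (encode ` quot_space g) (E.push (quot_e g \<eta>)) (E.push (quot_f g \<eta> u))
      (E.push (quot_h g)) = I"
    using ZV_eq_if_R_iso[OF Q.R_module E.R_module_push[OF Q.R_module] refl E.R_iso_push]
    by (simp add: Q.ZV_quot g)
  then show ?thesis using that E.whittaker_push[OF Q.whittaker_quot] by blast
qed

theorem mainTheorem2:
  fixes fp u :: "complex poly" and eta :: complex
  assumes "eta \<noteq> 0"
    and "fp = smult (1/2) (pcompose u [:1, 1:] - u)"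
  shows "(\<forall>(sc1::complex \<Rightarrow> 'a::ab_group_add \<Rightarrow> 'a) M1 e1 f1 h1.
            whittaker fp eta sc1 M1 e1 f1 h1 \<longrightarrow> is_ideal (ZV u sc1 M1 e1 f1 h1))
    \<and> (\<forall>(sc1::complex \<Rightarrow> 'a::ab_group_add \<Rightarrow> 'a) M1 e1 f1 h1
          (sc2::complex \<Rightarrow> 'b::ab_group_add \<Rightarrow> 'b) M2 e2 f2 h2.
          whittaker fp eta sc1 M1 e1 f1 h1 \<longrightarrow> whittaker fp eta sc2 M2 e2 f2 h2 \<longrightarrow>
          (R_iso sc1 M1 e1 f1 h1 sc2 M2 e2 f2 h2 \<longleftrightarrow>
           ZV u sc1 M1 e1 f1 h1 = ZV u sc2 M2 e2 f2 h2))
    \<and> (\<forall>I. is_ideal I \<longrightarrow>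
          (\<exists>(M::complex poly set) e f h. whittaker fp eta smult M e f h
              \<and> ZV u smult M e f h = I))"
proof (intro conjI allI impI)
  fix sc1 :: "complex \<Rightarrow> 'a::ab_group_add \<Rightarrow> 'a" and M1 e1 f1 h1
  assume "whittaker fp eta sc1 M1 e1 f1 h1"
  then have "rmodule sc1 fp u M1 e1 f1 h1"
    using rmoduleI assms(2) unfolding whittaker_def by blast
  then show "is_ideal (ZV u sc1 M1 e1 f1 h1)"
    by (rule rmodule.ZV_is_ideal)
next
  fix sc1 :: "complex \<Rightarrow> 'a::ab_group_add \<Rightarrow> 'a" and M1 e1 f1 h1
    and sc2 :: "complex \<Rightarrow> 'b::ab_group_add \<Rightarrow> 'b" and M2 e2 f2 h2
  assume W1: "whittaker fp eta sc1 M1 e1 f1 h1" and W2: "whittaker fp eta sc2 M2 e2 f2 h2"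
  obtain v1 v2 where "whittaker_module sc1 fp u M1 e1 f1 h1 eta v1"
    and "whittaker_module sc2 fp u M2 e2 f2 h2 eta v2"
    using whittaker_moduleE[OF W1 assms] whittaker_moduleE[OF W2 assms] by metis
  then show "R_iso sc1 M1 e1 f1 h1 sc2 M2 e2 f2 h2 \<longleftrightarrow> ZV u sc1 M1 e1 f1 h1 = ZV u sc2 M2 e2 f2 h2"
    using ZV_eq_if_R_iso[OF _ _ assms(2)] R_iso_if_ZV_eq W1 W2 unfolding whittaker_def by metis
next
  fix I :: "complex poly set" assume "is_ideal I"
  then show "\<exists>(M::complex poly set) e f h. whittaker fp eta smult M e f h \<and> ZV u smult M e f h = I"
    using whittaker_with_ZV assms by metis
qed

end
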